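(* Let $\Phi$ be a commutative ring with unity, $\Delta=\{\delta_1,\ldots,\delta_m\}$ a basic set of derivation operators, $A=\Phi\{x_1,\ldots,x_n\}$, and let $I$ be the differential ideal of $A$ generated by $f_1,\ldots,f_r\in A$. Let $B=\Phi\{x_1,\ldots,x_n,t\}$ with one more differential variable $t$, and identify $A$ with the corresponding differential subalgebra of $B$. Let $S_I$ be the differential subalgebra of $B$ generated by $$x_1,\ldots,x_n,\ \delta_1(t),\ldots,\delta_m(t),\ tf_1,\ldots,tf_r.$$ Then for every $f\in A$: $f\in I$ if and only if $tf\in S_I$.
   Context: $\Phi$ is regarded as a differential ring with all $\delta_l$ acting as zero. The differential polynomial ring $\Phi\{y_1,\ldots,y_k\}$ is the polynomial ring over $\Phi$ in the algebraically independent variables $\theta(y_i)$, where $\theta=\delta_1^{j_1}\cdots\delta_m^{j_m}$ ranges over the free commutative monoid generated by $\Delta$, with each $\delta_l$ the derivation determined by $\delta_l(\theta(y_i))=(\delta_l\theta)(y_i)$, $\delta_l(\Phi)=0$. A differential ideal is an ideal closed under all $\delta_l$; the differential subalgebra generated by a set is the smallest $\Phi$-subalgebra with unity containing it and closed under all $\delta_l$. *)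

theory Defs
  imports Main "HOL-Library.Poly_Mapping"
begin

text \<open>Differential variables theta(y_i) are pairs (i, theta), where theta is a
finitely supported exponent vector (key l stands for delta_(l+1)).\<close>

type_synonym dvar = "nat \<times> (nat \<Rightarrow>\<^sub>0 nat)"
type_synonym 'a dpoly = "(dvar \<Rightarrow>\<^sub>0 nat) \<Rightarrow>\<^sub>0 'a"

definition dX :: "nat \<Rightarrow> (nat \<Rightarrow>\<^sub>0 nat) \<Rightarrow> 'a::comm_ring_1 dpoly" where
  "dX i \<theta> = Poly_Mapping.single (Poly_Mapping.single (i, \<theta>) 1) 1"

definition dconst :: "'a::comm_ring_1 \<Rightarrow> 'a dpoly" where
  "dconst c = Poly_Mapping.single 0 c"

definition dring :: "nat \<Rightarrow> nat \<Rightarrow> 'a::comm_ring_1 dpoly set" where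
  "dring m k = {p. \<forall>mon\<in>Poly_Mapping.keys (p :: 'a dpoly). \<forall>v\<in>Poly_Mapping.keys mon. fst v < k \<and> Poly_Mapping.keys (snd v) \<subseteq> {..<m}}"

text \<open>The derivation delta_l: Phi-linear, Leibniz rule, and
delta_l(theta(y_i)) = (delta_l theta)(y_i).\<close>
definition dderiv :: "nat \<Rightarrow> 'a::comm_ring_1 dpoly \<Rightarrow> 'a dpoly" where
  "dderiv l p = (\<Sum>mon\<in>Poly_Mapping.keys (p :: 'a dpoly). \<Sum>v\<in>Poly_Mapping.keys mon.
      Poly_Mapping.single (mon - Poly_Mapping.single v 1)
        (Poly_Mapping.lookup p mon * of_nat (Poly_Mapping.lookup mon v))
      * dX (fst v) (snd v + Poly_Mapping.single l 1))"

inductive_set diff_ideal :: "nat \<Rightarrow> nat \<Rightarrow> 'a::comm_ring_1 dpoly set \<Rightarrow> 'a dpoly set"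
  for m k F where
  gen: "f \<in> F \<Longrightarrow> f \<in> diff_ideal m k F"
| zero: "0 \<in> diff_ideal m k F"
| add: "a \<in> diff_ideal m k F \<Longrightarrow> b \<in> diff_ideal m k F \<Longrightarrow> a + b \<in> diff_ideal m k F"
| mult: "a \<in> diff_ideal m k F \<Longrightarrow> r \<in> dring m k \<Longrightarrow> r * a \<in> diff_ideal m k F"
| deriv: "a \<in> diff_ideal m k F \<Longrightarrow> l < m \<Longrightarrow> dderiv l a \<in> diff_ideal m k F"

inductive_set diff_subalg :: "nat \<Rightarrow> 'a::comm_ring_1 dpoly set \<Rightarrow> 'a dpoly set"
  for m G where
  gen: "g \<in> G \<Longrightarrow> g \<in> diff_subalg m G"
| const: "dconst c \<in> diff_subalg m G"
| add: "a \<in> diff_subalg m G \<Longrightarrow> b \<in> diff_subalg m G \<Longrightarrow> a + b \<in> diff_subalg m G"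
| mult: "a \<in> diff_subalg m G \<Longrightarrow> b \<in> diff_subalg m G \<Longrightarrow> a * b \<in> diff_subalg m G"
| deriv: "a \<in> diff_subalg m G \<Longrightarrow> l < m \<Longrightarrow> dderiv l a \<in> diff_subalg m G"

end

theory Submission
  imports Defs
begin

text \<open>Write \<open>t\<close> for the variable \<open>y\<^sub>n\<close>. If \<open>f \<in> I\<close>, then \<open>t f \<in> S\<^sub>I\<close> by induction over \<open>I\<close>: the
generators \<open>t f\<^sub>j\<close> lie in \<open>S\<^sub>I\<close>, multipliers from \<open>A\<close> lie in \<open>S\<^sub>I\<close> because the \<open>x\<^sub>i\<close> do, and
\<open>t \<delta>\<^sub>l f = \<delta>\<^sub>l (t f) - \<delta>\<^sub>l(t) f\<close>.

Conversely, replace \<open>t\<close> by a constant \<open>\<epsilon>\<close> with \<open>\<epsilon>\<^sup>2 = 0\<close>: a monomial free of \<open>t\<close> is kept,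
a monomial whose only factor involving \<open>t\<close> is \<open>t\<close> itself becomes \<open>\<epsilon>\<close> times its quotient by
\<open>t\<close>, and every other monomial becomes \<open>0\<close>. This is a differential ring homomorphism
\<open>p \<mapsto> free_part p + \<epsilon> linear_coeff p\<close> from \<open>B\<close> to \<open>A[\<epsilon>]\<close>. It maps the generators of \<open>S\<^sub>I\<close>
into \<open>A + \<epsilon> I\<close>, a differential subalgebra because \<open>I\<close> is a differential ideal of \<open>A\<close>; hence
\<open>t f \<in> S\<^sub>I\<close> gives \<open>f = linear_coeff (t f) \<in> I\<close>.\<close>

lemma poly_mapping_sum_single:
  "(\<Sum>k\<in>Poly_Mapping.keys p. Poly_Mapping.single k (Poly_Mapping.lookup p k)) = p"
  by (rule poly_mapping_eqI) (auto simp: lookup_sum lookup_single when_def in_keys_iff)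

lemma update_eq_add_single:
  "a \<notin> Poly_Mapping.keys f \<Longrightarrow> Poly_Mapping.update a b f = f + Poly_Mapping.single a b"
  by (intro poly_mapping_eqI) (auto simp: lookup_update lookup_add lookup_single in_keys_iff when_def)

lemma poly_mapping_induct [case_names zero single add]:
  fixes p :: "'a \<Rightarrow>\<^sub>0 'b::comm_monoid_add"
  assumes "P 0" and "\<And>a c. P (Poly_Mapping.single a c)" and "\<And>p q. P p \<Longrightarrow> P q \<Longrightarrow> P (p + q)"
  shows "P p"
  by (induction p rule: update_induct) (simp_all add: assms update_eq_add_single)

lemma poly_mapping_induct2 [case_names zero_left zero_right add_left add_right single]:
  fixes p :: "'a \<Rightarrow>\<^sub>0 'b::comm_monoid_add" and q :: "'c \<Rightarrow>\<^sub>0 'd::comm_monoid_add"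
  assumes "\<And>q. P 0 q" and "\<And>p. P p 0"
    and "\<And>p1 p2 q. P p1 q \<Longrightarrow> P p2 q \<Longrightarrow> P (p1 + p2) q"
    and "\<And>p q1 q2. P p q1 \<Longrightarrow> P p q2 \<Longrightarrow> P p (q1 + q2)"
    and "\<And>a c b d. P (Poly_Mapping.single a c) (Poly_Mapping.single b d)"
  shows "P p q"
proof (induction p rule: poly_mapping_induct)
  case (single a c)
  show ?case by (induction q rule: poly_mapping_induct) (use assms in auto)
qed (use assms in auto)

lemma add_minus_single_left:
  "Poly_Mapping.lookup a v \<noteq> 0 \<Longrightarrow> a + b - Poly_Mapping.single v 1 = (a - Poly_Mapping.single v 1) + (b :: 'x \<Rightarrow>\<^sub>0 nat)"
  by (intro poly_mapping_eqI) (auto simp: lookup_add lookup_minus lookup_single when_def)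

lemma add_minus_single_right:
  "Poly_Mapping.lookup b v \<noteq> 0 \<Longrightarrow> a + b - Poly_Mapping.single v 1 = a + (b - Poly_Mapping.single v 1 :: 'x \<Rightarrow>\<^sub>0 nat)"
  by (intro poly_mapping_eqI) (auto simp: lookup_add lookup_minus lookup_single when_def)

lemma keys_minus_subset_nat: "Poly_Mapping.keys (a - b :: 'x \<Rightarrow>\<^sub>0 nat) \<subseteq> Poly_Mapping.keys a"
  by (auto simp: in_keys_iff lookup_minus)

section \<open>Derivations\<close>

definition dvar_deriv :: "nat \<Rightarrow> dvar \<Rightarrow> dvar" where
  "dvar_deriv l v = (fst v, snd v + Poly_Mapping.single l 1)"

lemma fst_dvar_deriv [simp]: "fst (dvar_deriv l v) = fst v"
  by (simp add: dvar_deriv_def)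

lemma lookup_snd_dvar_deriv: "Poly_Mapping.lookup (snd (dvar_deriv l v)) l = Suc (Poly_Mapping.lookup (snd v) l)"
  by (simp add: dvar_deriv_def lookup_add)

lemma dvar_deriv_neq_self: "dvar_deriv l v \<noteq> v"
  by (metis lookup_snd_dvar_deriv n_not_Suc_n)

lemma snd_dvar_deriv_nonzero: "snd (dvar_deriv l v) \<noteq> 0"
  by (metis lookup_snd_dvar_deriv lookup_zero nat.distinct(1))

abbreviation deriv_term :: "nat \<Rightarrow> (dvar \<Rightarrow>\<^sub>0 nat) \<Rightarrow> dvar \<Rightarrow> dvar \<Rightarrow>\<^sub>0 nat" where
  "deriv_term l a v \<equiv> a - Poly_Mapping.single v 1 + Poly_Mapping.single (dvar_deriv l v) 1"

lemma dderiv_add: "dderiv l (p + q) = dderiv l p + dderiv l q"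
  unfolding dderiv_def
  by (rule setsum_keys_plus_distrib) (simp_all add: single_add distrib_right sum.distrib)

lemma dderiv_zero [simp]: "dderiv l 0 = 0"
  by (simp add: dderiv_def)

lemma dderiv_single:
  "dderiv l (Poly_Mapping.single a c :: 'a::comm_ring_1 dpoly) =
     (\<Sum>v\<in>Poly_Mapping.keys a. Poly_Mapping.single (deriv_term l a v) (c * of_nat (Poly_Mapping.lookup a v)))"
  by (simp add: dderiv_def dX_def mult_single dvar_deriv_def)

lemma dderiv_dX: "dderiv l (dX i \<theta> :: 'a::comm_ring_1 dpoly) = dX i (\<theta> + Poly_Mapping.single l 1)"
  by (simp add: dX_def dderiv_single dvar_deriv_def)

text \<open>If \<open>v\<close> does not occur in \<open>a\<close> (resp. \<open>b\<close>), the truncated subtraction is harmless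
because the coefficient vanishes.\<close>

lemma dderiv_mult_single_term:
  fixes a b w :: "dvar \<Rightarrow>\<^sub>0 nat" and c d :: "'a::comm_ring_1"
  shows "Poly_Mapping.single (a + b - Poly_Mapping.single v 1 + w)
       (c * d * of_nat (Poly_Mapping.lookup a v + Poly_Mapping.lookup b v))
     = Poly_Mapping.single (a - Poly_Mapping.single v 1 + w + b) (c * of_nat (Poly_Mapping.lookup a v) * d)
     + Poly_Mapping.single (a + (b - Poly_Mapping.single v 1 + w)) (c * d * of_nat (Poly_Mapping.lookup b v))"
proof -
  have left: "Poly_Mapping.single (a - Poly_Mapping.single v 1 + w + b) (c * of_nat (Poly_Mapping.lookup a v) * d)
      = Poly_Mapping.single (a + b - Poly_Mapping.single v 1 + w) (c * d * of_nat (Poly_Mapping.lookup a v))"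
    using add_minus_single_left[of a v b] by (cases "Poly_Mapping.lookup a v = 0") (simp_all add: ac_simps)
  have right: "Poly_Mapping.single (a + (b - Poly_Mapping.single v 1 + w)) (c * d * of_nat (Poly_Mapping.lookup b v))
      = Poly_Mapping.single (a + b - Poly_Mapping.single v 1 + w) (c * d * of_nat (Poly_Mapping.lookup b v))"
    using add_minus_single_right[of b v a] by (cases "Poly_Mapping.lookup b v = 0") (simp_all add: ac_simps)
  show ?thesis
    unfolding left right by (simp add: single_add[symmetric] distrib_left)
qed

lemma dderiv_mult_single:
  fixes a b :: "dvar \<Rightarrow>\<^sub>0 nat" and c d :: "'a::comm_ring_1"
  shows "dderiv l (Poly_Mapping.single a c * Poly_Mapping.single b d) =
    dderiv l (Poly_Mapping.single a c) * Poly_Mapping.single b d +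
    Poly_Mapping.single a c * dderiv l (Poly_Mapping.single b d)"
proof -
  let ?K = "Poly_Mapping.keys a \<union> Poly_Mapping.keys b"
  let ?w = "\<lambda>v. Poly_Mapping.single (dvar_deriv l v) (1::nat)"
  have keys_sum: "Poly_Mapping.keys (a + b) = ?K"
    by (auto simp: in_keys_iff lookup_add)
  have lhs: "dderiv l (Poly_Mapping.single a c * Poly_Mapping.single b d) =
    (\<Sum>v\<in>?K. Poly_Mapping.single (a + b - Poly_Mapping.single v 1 + ?w v)
       (c * d * of_nat (Poly_Mapping.lookup a v + Poly_Mapping.lookup b v)))"
    by (simp add: mult_single dderiv_single keys_sum lookup_add)
  have left: "dderiv l (Poly_Mapping.single a c) * Poly_Mapping.single b d =
    (\<Sum>v\<in>?K. Poly_Mapping.single (a - Poly_Mapping.single v 1 + ?w v + b) (c * of_nat (Poly_Mapping.lookup a v) * d))"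
    by (simp add: dderiv_single sum_distrib_right mult_single)
       (rule sum.mono_neutral_left, auto simp: in_keys_iff)
  have right: "Poly_Mapping.single a c * dderiv l (Poly_Mapping.single b d) =
    (\<Sum>v\<in>?K. Poly_Mapping.single (a + (b - Poly_Mapping.single v 1 + ?w v)) (c * d * of_nat (Poly_Mapping.lookup b v)))"
    by (simp add: dderiv_single sum_distrib_left mult_single mult.assoc)
       (rule sum.mono_neutral_left, auto simp: in_keys_iff)
  show ?thesis
    unfolding lhs left right sum.distrib[symmetric] by (intro sum.cong refl dderiv_mult_single_term)
qed

lemma dderiv_mult: "dderiv l (p * q :: 'a::comm_ring_1 dpoly) = dderiv l p * q + p * dderiv l q"
  by (induction p q rule: poly_mapping_induct2)
     (simp_all add: dderiv_add dderiv_mult_single algebra_simps)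

definition dring_monom :: "nat \<Rightarrow> nat \<Rightarrow> (dvar \<Rightarrow>\<^sub>0 nat) \<Rightarrow> bool" where
  "dring_monom m k a \<longleftrightarrow> (\<forall>v\<in>Poly_Mapping.keys a. fst v < k \<and> Poly_Mapping.keys (snd v) \<subseteq> {..<m})"

lemma dring_iff_monoms: "p \<in> dring m k \<longleftrightarrow> (\<forall>a\<in>Poly_Mapping.keys p. dring_monom m k a)"
  by (simp add: dring_def dring_monom_def)

lemma dring_monom_add: "dring_monom m k a \<Longrightarrow> dring_monom m k b \<Longrightarrow> dring_monom m k (a + b)"
  using keys_add[of a b] by (auto simp: dring_monom_def)

lemma dring_zero: "0 \<in> dring m k"
  by (simp add: dring_iff_monoms)

lemma dring_add: "p \<in> dring m k \<Longrightarrow> q \<in> dring m k \<Longrightarrow> p + q \<in> dring m k"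
  using keys_add[of p q] by (auto simp: dring_iff_monoms)

lemma dring_sum: "(\<And>i. i \<in> I \<Longrightarrow> f i \<in> dring m k) \<Longrightarrow> sum f I \<in> dring m k"
  by (induction I rule: infinite_finite_induct) (auto intro: dring_add dring_zero)

lemma dring_mult: "p \<in> dring m k \<Longrightarrow> q \<in> dring m k \<Longrightarrow> p * q \<in> dring m k"
  using keys_mult[of p q] by (fastforce simp: dring_iff_monoms intro: dring_monom_add)

lemma dring_single: "dring_monom m k a \<Longrightarrow> Poly_Mapping.single a c \<in> dring m k"
  by (simp add: dring_iff_monoms)

lemma dconst_in_dring: "dconst c \<in> dring m k"
  by (simp add: dconst_def dring_single dring_monom_def)

lemma dX_in_dring: "i < k \<Longrightarrow> Poly_Mapping.keys \<theta> \<subseteq> {..<m} \<Longrightarrow> dX i \<theta> \<in> dring m k"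
  by (simp add: dX_def dring_single dring_monom_def)

lemma dring_dderiv:
  assumes "p \<in> dring m k" and "l < m"
  shows "dderiv l p \<in> dring m k"
  unfolding dderiv_def
proof (intro dring_sum dring_mult dring_single dX_in_dring)
  fix a v assume a: "a \<in> Poly_Mapping.keys p" and v: "v \<in> Poly_Mapping.keys a"
  then have "dring_monom m k a" using assms(1) by (simp add: dring_iff_monoms)
  then show "dring_monom m k (a - Poly_Mapping.single v 1)"
    using keys_minus_subset_nat by (fastforce simp: dring_monom_def)
  show "fst v < k" and "Poly_Mapping.keys (snd v + Poly_Mapping.single l 1) \<subseteq> {..<m}"
    using \<open>dring_monom m k a\<close> v assms(2) keys_add[of "snd v" "Poly_Mapping.single l 1"]
    by (auto simp: dring_monom_def)
qed

lemma diff_ideal_subset_dring: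
  assumes "F \<subseteq> dring m k"
  shows "diff_ideal m k F \<subseteq> dring m k"
proof
  fix p assume "p \<in> diff_ideal m k F"
  then show "p \<in> dring m k"
    by induction (use assms in \<open>auto intro: dring_zero dring_add dring_mult dring_dderiv\<close>)
qed

section \<open>Generated differential subalgebras\<close>

lemma diff_subalg_zero: "0 \<in> diff_subalg m G"
  using diff_subalg.const[of 0] by (simp add: dconst_def)

lemma diff_subalg_one: "1 \<in> diff_subalg m G"
  using diff_subalg.const[of 1] by (simp add: dconst_def)

lemma diff_subalg_diff:
  assumes "p \<in> diff_subalg m G" and "q \<in> diff_subalg m G"
  shows "p - q \<in> diff_subalg m G"
proof -
  have "p + dconst (-1) * q \<in> diff_subalg m G"
    by (intro diff_subalg.add diff_subalg.mult diff_subalg.const assms)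
  then show ?thesis by (simp add: dconst_def single_uminus)
qed

lemma diff_subalg_sum: "(\<And>i. i \<in> I \<Longrightarrow> f i \<in> diff_subalg m G) \<Longrightarrow> sum f I \<in> diff_subalg m G"
  by (induction I rule: infinite_finite_induct) (auto intro: diff_subalg.add diff_subalg_zero)

lemma diff_subalg_power: "p \<in> diff_subalg m G \<Longrightarrow> p ^ k \<in> diff_subalg m G"
  by (induction k) (simp_all add: diff_subalg_one diff_subalg.mult)

lemma dX_in_diff_subalg:
  assumes "dX i 0 \<in> diff_subalg m G" and "Poly_Mapping.keys \<theta> \<subseteq> {..<m}"
  shows "(dX i \<theta> :: 'a::comm_ring_1 dpoly) \<in> diff_subalg m G"
  using assms(2)
proof (induction \<theta> rule: update_induct)
  case const
  then show ?case using assms(1) by simp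
next
  case (update \<theta> l j)
  then have "l < m" and "Poly_Mapping.keys \<theta> \<subseteq> {..<m}"
    by (auto simp: keys_update)
  have "(dX i (\<theta> + Poly_Mapping.single l k) :: 'a dpoly) \<in> diff_subalg m G" for k
  proof (induction k)
    case 0
    then show ?case using update.IH \<open>Poly_Mapping.keys \<theta> \<subseteq> {..<m}\<close> by simp
  next
    case (Suc k)
    then have "dderiv l (dX i (\<theta> + Poly_Mapping.single l k) :: 'a dpoly) \<in> diff_subalg m G"
      using \<open>l < m\<close> by (rule diff_subalg.deriv)
    then show ?case by (simp add: dderiv_dX add.assoc single_add[symmetric])
  qed
  then show ?case using update.hyps by (simp add: update_eq_add_single)
qed

lemma single_dvar_power: "(Poly_Mapping.single (Poly_Mapping.single v k) 1 :: 'a::comm_ring_1 dpoly) = dX (fst v) (snd v) ^ k"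
proof (induction k)
  case (Suc k)
  have "(Poly_Mapping.single (Poly_Mapping.single v (Suc k)) 1 :: 'a dpoly)
      = Poly_Mapping.single (Poly_Mapping.single v 1) 1 * Poly_Mapping.single (Poly_Mapping.single v k) 1"
    by (simp add: mult_single single_add[symmetric])
  then show ?case using Suc by (simp add: dX_def)
qed simp

lemma monom_in_diff_subalg:
  assumes "\<And>i. i < k \<Longrightarrow> dX i 0 \<in> diff_subalg m G" and "dring_monom m k a"
  shows "(Poly_Mapping.single a 1 :: 'a::comm_ring_1 dpoly) \<in> diff_subalg m G"
  using assms(2)
proof (induction a rule: update_induct)
  case const
  then show ?case using diff_subalg_one by simp
next
  case (update a v j)
  then have v: "fst v < k" "Poly_Mapping.keys (snd v) \<subseteq> {..<m}" and "dring_monom m k a"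
    by (auto simp: dring_monom_def keys_update)
  have "(Poly_Mapping.single a 1 :: 'a dpoly) * Poly_Mapping.single (Poly_Mapping.single v j) 1 \<in> diff_subalg m G"
    using update.IH[OF \<open>dring_monom m k a\<close>] dX_in_diff_subalg[OF assms(1)[OF v(1)] v(2)]
    by (simp add: single_dvar_power diff_subalg.mult diff_subalg_power)
  then show ?case using update.hyps by (simp add: update_eq_add_single mult_single)
qed

lemma dring_subset_diff_subalg:
  assumes "\<And>i. i < k \<Longrightarrow> dX i 0 \<in> diff_subalg m G"
  shows "dring m k \<subseteq> (diff_subalg m G :: 'a::comm_ring_1 dpoly set)"
proof
  fix p :: "'a dpoly" assume p: "p \<in> dring m k"
  have "Poly_Mapping.single a (Poly_Mapping.lookup p a) \<in> diff_subalg m G"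
    if "a \<in> Poly_Mapping.keys p" for a
  proof -
    have "Poly_Mapping.single a 1 \<in> diff_subalg m G"
      using p that by (intro monom_in_diff_subalg assms) (auto simp: dring_iff_monoms)
    then have "dconst (Poly_Mapping.lookup p a) * Poly_Mapping.single a 1 \<in> diff_subalg m G"
      by (rule diff_subalg.mult[OF diff_subalg.const])
    then show ?thesis by (simp add: dconst_def mult_single)
  qed
  then have "(\<Sum>a\<in>Poly_Mapping.keys p. Poly_Mapping.single a (Poly_Mapping.lookup p a)) \<in> diff_subalg m G"
    by (rule diff_subalg_sum)
  then show "p \<in> diff_subalg m G"
    by (simp only: poly_mapping_sum_single)
qed

definition subalg_gens :: "nat \<Rightarrow> nat \<Rightarrow> 'a::comm_ring_1 dpoly set \<Rightarrow> 'a dpoly set" where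
  "subalg_gens m n F = {dX i 0 | i. i < n} \<union> {dX n (Poly_Mapping.single l 1) | l. l < m} \<union> {dX n 0 * g | g. g \<in> F}"

lemma dring_subset_subalg_gens: "dring m n \<subseteq> diff_subalg m (subalg_gens m n F)"
  by (rule dring_subset_diff_subalg) (auto simp: subalg_gens_def intro: diff_subalg.gen)

lemma diff_ideal_t_mult_in_diff_subalg:
  assumes "F \<subseteq> dring m n" and "f \<in> diff_ideal m n F"
  shows "dX n 0 * f \<in> diff_subalg m (subalg_gens m n F)"
  using assms(2)
proof induction
  case (gen g)
  then show ?case by (auto simp: subalg_gens_def intro: diff_subalg.gen)
next
  case zero
  then show ?case by (simp add: diff_subalg_zero)
next
  case (add a b)
  then show ?case by (simp add: distrib_left diff_subalg.add)
next
  case (mult a r)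
  have "r \<in> diff_subalg m (subalg_gens m n F)"
    using mult.hyps(2) dring_subset_subalg_gens by blast
  then have "r * (dX n 0 * a) \<in> diff_subalg m (subalg_gens m n F)"
    using mult.IH by (rule diff_subalg.mult)
  then show ?case by (simp only: mult.left_commute)
next
  case (deriv a l)
  have "dX n (Poly_Mapping.single l 1) \<in> diff_subalg m (subalg_gens m n F)"
    using deriv.hyps(2) by (auto simp: subalg_gens_def intro: diff_subalg.gen)
  moreover have "a \<in> diff_subalg m (subalg_gens m n F)"
    using deriv.hyps(1) diff_ideal_subset_dring[OF assms(1)] dring_subset_subalg_gens by blast
  ultimately have "dX n (Poly_Mapping.single l 1) * a \<in> diff_subalg m (subalg_gens m n F)"
    by (rule diff_subalg.mult)
  moreover have "dderiv l (dX n 0 * a) \<in> diff_subalg m (subalg_gens m n F)"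
    using deriv.IH deriv.hyps(2) by (rule diff_subalg.deriv)
  moreover have "dX n 0 * dderiv l a = dderiv l (dX n 0 * a) - dX n (Poly_Mapping.single l 1) * a"
    by (simp add: dderiv_mult dderiv_dX)
  ultimately show ?case
    by (simp only: diff_subalg_diff)
qed

section \<open>Substituting a square-zero constant for \<open>t\<close>\<close>

definition free_of :: "nat \<Rightarrow> (dvar \<Rightarrow>\<^sub>0 nat) \<Rightarrow> bool" where
  "free_of n a \<longleftrightarrow> (\<forall>\<theta>. Poly_Mapping.lookup a (n, \<theta>) = 0)"

definition linear_in :: "nat \<Rightarrow> (dvar \<Rightarrow>\<^sub>0 nat) \<Rightarrow> bool" where
  "linear_in n a \<longleftrightarrow> (\<forall>\<theta>. Poly_Mapping.lookup a (n, \<theta>) = (if \<theta> = 0 then 1 else 0))"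

abbreviation t_monom :: "nat \<Rightarrow> dvar \<Rightarrow>\<^sub>0 nat" where
  "t_monom n \<equiv> Poly_Mapping.single (n, 0) 1"

definition free_part :: "nat \<Rightarrow> 'a::comm_ring_1 dpoly \<Rightarrow> 'a dpoly" where
  "free_part n p =
     (\<Sum>a\<in>Poly_Mapping.keys p. if free_of n a then Poly_Mapping.single a (Poly_Mapping.lookup p a) else 0)"

definition linear_coeff :: "nat \<Rightarrow> 'a::comm_ring_1 dpoly \<Rightarrow> 'a dpoly" where
  "linear_coeff n p =
     (\<Sum>a\<in>Poly_Mapping.keys p.
        if linear_in n a then Poly_Mapping.single (a - t_monom n) (Poly_Mapping.lookup p a) else 0)"

lemma free_of_add: "free_of n (a + b) \<longleftrightarrow> free_of n a \<and> free_of n b"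
  by (auto simp: free_of_def lookup_add)

lemma linear_in_lookup_t: "linear_in n a \<Longrightarrow> Poly_Mapping.lookup a (n, 0) = 1"
  by (simp add: linear_in_def)

lemma linear_in_add:
  "linear_in n (a + b) \<longleftrightarrow> linear_in n a \<and> free_of n b \<or> free_of n a \<and> linear_in n b"
proof
  assume lin: "linear_in n (a + b)"
  then have t: "Poly_Mapping.lookup a (n, 0) + Poly_Mapping.lookup b (n, 0) = 1"
    using linear_in_lookup_t by (fastforce simp: lookup_add)
  have others: "Poly_Mapping.lookup a (n, \<theta>) = 0 \<and> Poly_Mapping.lookup b (n, \<theta>) = 0" if "\<theta> \<noteq> 0" for \<theta>
    using lin[unfolded linear_in_def, THEN spec[of _ \<theta>]] that by (simp add: lookup_add)
  from t consider "Poly_Mapping.lookup a (n, 0) = 1" "Poly_Mapping.lookup b (n, 0) = 0"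
    | "Poly_Mapping.lookup a (n, 0) = 0" "Poly_Mapping.lookup b (n, 0) = 1"
    by linarith
  then show "linear_in n a \<and> free_of n b \<or> free_of n a \<and> linear_in n b"
    unfolding linear_in_def free_of_def by cases (metis others)+
next
  assume "linear_in n a \<and> free_of n b \<or> free_of n a \<and> linear_in n b"
  then show "linear_in n (a + b)"
    by (auto simp: linear_in_def free_of_def lookup_add)
qed

lemma linear_in_imp_not_free: "linear_in n a \<Longrightarrow> \<not> free_of n a"
  by (metis free_of_def linear_in_lookup_t zero_neq_one)

lemma dring_monom_imp_free_of: "dring_monom m n a \<Longrightarrow> free_of n a"
  unfolding dring_monom_def free_of_def by (metis fst_conv in_keys_iff less_irrefl)

lemma lookup_minus_t_monom:
  "linear_in n a \<Longrightarrow> Poly_Mapping.lookup (a - t_monom n) u = (if fst u = n then 0 else Poly_Mapping.lookup a u)"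
  by (cases u) (auto simp: linear_in_def lookup_minus lookup_single)

lemma free_part_add: "free_part n (p + q) = free_part n p + free_part n q"
  unfolding free_part_def by (rule setsum_keys_plus_distrib) (simp_all add: single_add)

lemma linear_coeff_add: "linear_coeff n (p + q) = linear_coeff n p + linear_coeff n q"
  unfolding linear_coeff_def by (rule setsum_keys_plus_distrib) (simp_all add: single_add)

lemma free_part_zero [simp]: "free_part n 0 = 0"
  by (simp add: free_part_def)

lemma linear_coeff_zero [simp]: "linear_coeff n 0 = 0"
  by (simp add: linear_coeff_def)

lemma free_part_single:
  "free_part n (Poly_Mapping.single a c) = (if free_of n a then Poly_Mapping.single a c else 0)"
  by (cases "c = 0") (simp_all add: free_part_def)

lemma linear_coeff_single:
  "linear_coeff n (Poly_Mapping.single a c) = (if linear_in n a then Poly_Mapping.single (a - t_monom n) c else 0)"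
  by (cases "c = 0") (simp_all add: linear_coeff_def)

lemma free_part_sum: "free_part n (sum f A) = (\<Sum>x\<in>A. free_part n (f x))"
  using sum_comp_morphism[of "free_part n" f A] by (simp add: free_part_add comp_def)

lemma linear_coeff_sum: "linear_coeff n (sum f A) = (\<Sum>x\<in>A. linear_coeff n (f x))"
  using sum_comp_morphism[of "linear_coeff n" f A] by (simp add: linear_coeff_add comp_def)

lemma free_part_mult: "free_part n (p * q :: 'a::comm_ring_1 dpoly) = free_part n p * free_part n q"
  by (induction p q rule: poly_mapping_induct2)
     (simp_all add: free_part_add free_part_single mult_single free_of_add distrib_left distrib_right)

lemma linear_coeff_mult_single:
  fixes c d :: "'a::comm_ring_1"
  shows "linear_coeff n (Poly_Mapping.single a c * Poly_Mapping.single b d) =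
    free_part n (Poly_Mapping.single a c) * linear_coeff n (Poly_Mapping.single b d) +
    free_part n (Poly_Mapping.single b d) * linear_coeff n (Poly_Mapping.single a c)"
proof (cases "linear_in n (a + b)")
  case True
  then consider "linear_in n a" "free_of n b" | "free_of n a" "linear_in n b"
    by (auto simp: linear_in_add)
  then show ?thesis
  proof cases
    case 1
    then have "\<not> free_of n a" "\<not> linear_in n b"
      using linear_in_imp_not_free by blast+
    moreover have "a + b - t_monom n = b + (a - t_monom n)"
      using add_minus_single_left[of a "(n, 0)" b] linear_in_lookup_t[OF 1(1)] by (simp add: add.commute)
    ultimately show ?thesis
      using 1 True by (simp add: free_part_single linear_coeff_single mult_single mult.commute)
  next
    case 2
    then have "\<not> free_of n b" "\<not> linear_in n a"
      using linear_in_imp_not_free by blast+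
    moreover have "a + b - t_monom n = a + (b - t_monom n)"
      using add_minus_single_right[of b "(n, 0)" a] linear_in_lookup_t[OF 2(2)] by simp
    ultimately show ?thesis
      using 2 True by (simp add: free_part_single linear_coeff_single mult_single)
  qed
next
  case False
  then show ?thesis
    by (auto simp: free_part_single linear_coeff_single mult_single linear_in_add)
qed

lemma linear_coeff_mult:
  "linear_coeff n (p * q :: 'a::comm_ring_1 dpoly) = free_part n p * linear_coeff n q + free_part n q * linear_coeff n p"
  by (induction p q rule: poly_mapping_induct2)
     (simp_all add: free_part_add linear_coeff_add linear_coeff_mult_single algebra_simps)

lemma lookup_deriv_term_other:
  "fst v \<noteq> n \<Longrightarrow> Poly_Mapping.lookup (deriv_term l a v) (n, \<theta>) = Poly_Mapping.lookup a (n, \<theta>)"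
  by (auto simp: lookup_add lookup_minus lookup_single when_def dvar_deriv_def)

lemma lookup_deriv_term_at_deriv: "Poly_Mapping.lookup (deriv_term l a v) (dvar_deriv l v) \<noteq> 0"
  using dvar_deriv_neq_self[of l v] by (simp add: lookup_add lookup_minus lookup_single)

lemma free_of_deriv_term:
  assumes "v \<in> Poly_Mapping.keys a"
  shows "free_of n (deriv_term l a v) \<longleftrightarrow> free_of n a"
proof (cases "fst v = n")
  case True
  then have "\<not> free_of n (deriv_term l a v)"
    using lookup_deriv_term_at_deriv[where l=l and a=a and v=v] unfolding free_of_def
    by (metis fst_dvar_deriv prod.collapse)
  moreover have "\<not> free_of n a"
    using assms True unfolding free_of_def by (metis in_keys_iff prod.collapse)
  ultimately show ?thesis by blast
qed (simp add: free_of_def lookup_deriv_term_other del: One_nat_def)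

lemma linear_in_deriv_term:
  "linear_in n (deriv_term l a v) \<longleftrightarrow> linear_in n a \<and> fst v \<noteq> n"
proof (cases "fst v = n")
  case True
  then have "\<not> linear_in n (deriv_term l a v)"
    using lookup_deriv_term_at_deriv[where l=l and a=a and v=v] snd_dvar_deriv_nonzero[of l v] unfolding linear_in_def
    by (metis fst_dvar_deriv prod.collapse)
  then show ?thesis using True by blast
qed (simp add: linear_in_def lookup_deriv_term_other del: One_nat_def)

lemma free_part_dderiv_single:
  "free_part n (dderiv l (Poly_Mapping.single a c :: 'a::comm_ring_1 dpoly)) = dderiv l (free_part n (Poly_Mapping.single a c))"
  by (cases "free_of n a")
     (simp_all add: dderiv_single free_part_sum free_part_single free_of_deriv_term
       del: One_nat_def cong: sum.cong)

lemma linear_coeff_dderiv_single: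
  "linear_coeff n (dderiv l (Poly_Mapping.single a c :: 'a::comm_ring_1 dpoly)) = dderiv l (linear_coeff n (Poly_Mapping.single a c))"
proof (cases "linear_in n a")
  case False
  then show ?thesis
    by (simp add: dderiv_single linear_coeff_sum linear_coeff_single linear_in_deriv_term del: One_nat_def)
next
  case True
  let ?t = "t_monom n"
  have keys: "Poly_Mapping.keys (a - ?t) = {v \<in> Poly_Mapping.keys a. fst v \<noteq> n}"
    using True by (auto simp: in_keys_iff lookup_minus_t_monom split: if_splits simp del: One_nat_def)
  have shift: "deriv_term l a v - ?t = deriv_term l (a - ?t) v" if "fst v \<noteq> n" for v
  proof -
    have "v \<noteq> (n, 0)" "dvar_deriv l v \<noteq> (n, 0)"
      using that by (auto simp: dvar_deriv_def)
    then show ?thesis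
      by (intro poly_mapping_eqI) (auto simp: lookup_add lookup_minus lookup_single when_def)
  qed
  have "linear_coeff n (dderiv l (Poly_Mapping.single a c)) =
      (\<Sum>v\<in>Poly_Mapping.keys a. if fst v \<noteq> n
         then Poly_Mapping.single (deriv_term l a v - ?t) (c * of_nat (Poly_Mapping.lookup a v)) else 0)"
    using True
    by (simp add: dderiv_single linear_coeff_sum linear_coeff_single linear_in_deriv_term del: One_nat_def)
  also have "\<dots> = (\<Sum>v\<in>Poly_Mapping.keys (a - ?t).
      Poly_Mapping.single (deriv_term l (a - ?t) v) (c * of_nat (Poly_Mapping.lookup (a - ?t) v)))"
    unfolding keys sum.inter_filter[OF finite_keys, symmetric]
    using True by (intro sum.cong refl) (simp add: shift lookup_minus_t_monom del: One_nat_def)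
  also have "\<dots> = dderiv l (linear_coeff n (Poly_Mapping.single a c))"
    using True by (simp add: linear_coeff_single dderiv_single)
  finally show ?thesis .
qed

lemma free_part_dderiv: "free_part n (dderiv l p :: 'a::comm_ring_1 dpoly) = dderiv l (free_part n p)"
  by (induction p rule: poly_mapping_induct) (simp_all add: free_part_dderiv_single dderiv_add free_part_add)

lemma linear_coeff_dderiv: "linear_coeff n (dderiv l p :: 'a::comm_ring_1 dpoly) = dderiv l (linear_coeff n p)"
  by (induction p rule: poly_mapping_induct) (simp_all add: linear_coeff_dderiv_single dderiv_add linear_coeff_add)

lemma free_part_dX: "free_part n (dX i \<theta>) = (if i = n then 0 else dX i \<theta>)"
  by (auto simp: dX_def free_part_single free_of_def lookup_single when_def)

lemma linear_coeff_dX: "linear_coeff n (dX i \<theta>) = (if i = n \<and> \<theta> = 0 then 1 else 0)"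
  by (auto simp: dX_def linear_coeff_single linear_in_def lookup_single)

lemma free_part_dconst: "free_part n (dconst c) = dconst c"
  by (simp add: dconst_def free_part_single free_of_def)

lemma linear_coeff_dconst: "linear_coeff n (dconst c) = 0"
  by (simp add: dconst_def linear_coeff_single linear_in_def)

lemma free_part_dring: "p \<in> dring m n \<Longrightarrow> free_part n p = p"
  unfolding free_part_def
  by (subst (2) poly_mapping_sum_single[symmetric], rule sum.cong)
     (auto simp: dring_iff_monoms dring_monom_imp_free_of)

lemma linear_coeff_dring: "p \<in> dring m n \<Longrightarrow> linear_coeff n p = 0"
  unfolding linear_coeff_def
  by (rule sum.neutral) (auto simp: dring_iff_monoms dest: dring_monom_imp_free_of linear_in_imp_not_free)

lemma linear_coeff_t_mult: "f \<in> dring m n \<Longrightarrow> linear_coeff n (dX n 0 * f) = f"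
  by (simp add: linear_coeff_mult free_part_dX linear_coeff_dX free_part_dring linear_coeff_dring)

lemma linear_coeff_free_part_of_diff_subalg:
  assumes "F \<subseteq> dring m n" and "p \<in> diff_subalg m (subalg_gens m n F)"
  shows "linear_coeff n p \<in> diff_ideal m n F \<and> free_part n p \<in> dring m n"
  using assms(2)
proof induction
  case (gen g)
  then consider (var) i where "g = dX i 0" "i < n"
    | (t_deriv) l where "g = dX n (Poly_Mapping.single l 1)"
    | (t_mult) h where "g = dX n 0 * h" "h \<in> F"
    by (auto simp: subalg_gens_def)
  then show ?case
  proof cases
    case var
    then show ?thesis by (simp add: free_part_dX linear_coeff_dX dX_in_dring diff_ideal.zero)
  next
    case t_deriv
    have "Poly_Mapping.single l (1::nat) \<noteq> 0"
      by (metis lookup_single_eq lookup_zero one_neq_zero)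
    then show ?thesis
      using t_deriv by (simp add: free_part_dX linear_coeff_dX dring_zero diff_ideal.zero)
  next
    case t_mult
    then have "h \<in> dring m n" using assms(1) by blast
    then show ?thesis
      using t_mult by (simp add: linear_coeff_t_mult free_part_mult free_part_dX dring_zero diff_ideal.gen)
  qed
next
  case (const c)
  then show ?case by (simp add: free_part_dconst linear_coeff_dconst dconst_in_dring diff_ideal.zero)
next
  case (add a b)
  then show ?case by (simp add: free_part_add linear_coeff_add dring_add diff_ideal.add)
next
  case (mult a b)
  then show ?case by (simp add: free_part_mult linear_coeff_mult dring_mult diff_ideal.add diff_ideal.mult)
next
  case (deriv a l)
  then show ?case by (simp add: free_part_dderiv linear_coeff_dderiv dring_dderiv diff_ideal.deriv)
qed

theorem proposition2:
  fixes m n :: nat and fs :: "'a::comm_ring_1 dpoly list" and f :: "'a dpoly"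
  assumes "set fs \<subseteq> dring m n"
    and "f \<in> dring m n"
  shows "f \<in> diff_ideal m n (set fs) \<longleftrightarrow>
         dX n 0 * f \<in> diff_subalg m
            ({dX i 0 | i. i < n} \<union> {dX n (Poly_Mapping.single l 1) | l. l < m}
             \<union> {dX n 0 * g | g. g \<in> set fs})"
  unfolding subalg_gens_def[symmetric]
proof
  assume "f \<in> diff_ideal m n (set fs)"
  then show "dX n 0 * f \<in> diff_subalg m (subalg_gens m n (set fs))"
    using assms(1) by (rule diff_ideal_t_mult_in_diff_subalg[rotated])
next
  assume "dX n 0 * f \<in> diff_subalg m (subalg_gens m n (set fs))"
  then have "linear_coeff n (dX n 0 * f) \<in> diff_ideal m n (set fs)"
    using linear_coeff_free_part_of_diff_subalg[OF assms(1)] by blast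
  then show "f \<in> diff_ideal m n (set fs)"
    using linear_coeff_t_mult[OF assms(2)] by simp
qed

end
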